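(* Let $N_t,N_r,M$ be positive integers with $M>r:=N_t+N_r$, let ${\bf F}\in\mathbb{C}^{N_r\times M}$, ${\bf G}\in\mathbb{C}^{N_t\times M}$, ${\bf H}_d\in\mathbb{C}^{N_r\times N_t}$, and let $\boldsymbol{\Theta}\in\mathbb{C}^{M\times M}$ be unitary and symmetric ($\boldsymbol{\Theta}\boldsymbol{\Theta}^H={\bf I}_M$, $\boldsymbol{\Theta}=\boldsymbol{\Theta}^T$). Let ${\bf Z}=[{\bf F}^H\,|\,{\bf G}^T]\in\mathbb{C}^{M\times r}$ and let ${\bf U}_Z\in\mathbb{C}^{M\times k}$ have orthonormal columns forming a basis of the column space of ${\bf Z}$ ($k=\operatorname{rank}{\bf Z}\le r$). Define $\tilde{\boldsymbol{\Theta}}={\bf U}_Z^H\boldsymbol{\Theta}{\bf U}_Z^*$ and $\boldsymbol{\Theta}_{lr}={\bf U}_Z\tilde{\boldsymbol{\Theta}}{\bf U}_Z^T$. Then $\boldsymbol{\Theta}_{lr}$ is a symmetric matrix of rank at most $r$, $\tilde{\boldsymbol{\Theta}}$ is a symmetric matrix with $\tilde{\boldsymbol{\Theta}}\tilde{\boldsymbol{\Theta}}^H\preceq{\bf I}_k$, and (i) ${\bf F}\boldsymbol{\Theta}{\bf G}^H={\bf F}\boldsymbol{\Theta}_{lr}{\bf G}^H$, hence ${\bf H}_d+{\bf F}\boldsymbol{\Theta}{\bf G}^H={\bf H}_d+{\bf F}\boldsymbol{\Theta}_{lr}{\bf G}^H$; (ii) $\boldsymbol{\Theta}_{lr}\boldsymbol{\Theta}_{lr}^H\preceq{\bf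 I}_M$.
   Context: ${\bf A}^*$ is the entrywise conjugate, ${\bf A}^H$ the conjugate transpose; ${\bf X}\preceq{\bf Y}$ means ${\bf Y}-{\bf X}$ is positive semidefinite. $[{\bf A}\,|\,{\bf B}]$ denotes horizontal concatenation. *)

theory Defs
  imports "Jordan_Normal_Form.Matrix" "Jordan_Normal_Form.DL_Rank"
begin

definition cconj :: "complex mat \<Rightarrow> complex mat" where
  "cconj A = map_mat cnj A"

definition adj :: "complex mat \<Rightarrow> complex mat" where
  "adj A = transpose_mat (cconj A)"

definition psd :: "complex mat \<Rightarrow> bool" where
  "psd A \<longleftrightarrow> A \<in> carrier_mat (dim_row A) (dim_row A) \<and>
     (\<forall>x \<in> carrier_vec (dim_row A).
        Im (map_vec cnj x \<bullet> (A *\<^sub>v x)) = 0 \<and> Re (map_vec cnj x \<bullet> (A *\<^sub>v x)) \<ge> 0)"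

definition loewner_le :: "complex mat \<Rightarrow> complex mat \<Rightarrow> bool" where
  "loewner_le X Y \<longleftrightarrow> dim_row X = dim_row Y \<and> dim_col X = dim_col Y \<and> psd (Y - X)"

definition hcat :: "complex mat \<Rightarrow> complex mat \<Rightarrow> complex mat" where
  "hcat A B = mat_of_cols (dim_row A) (cols A @ cols B)"

definition colspace :: "complex mat \<Rightarrow> complex vec set" where
  "colspace A = {A *\<^sub>v x | x. x \<in> carrier_vec (dim_col A)}"

definition crank :: "complex mat \<Rightarrow> nat" where
  "crank A = vec_space.rank (dim_row A) A"

end

theory Submission
  imports Defs
begin

text \<open>
  \<open>X X\<^sup>H \<preceq> I\<close> says exactly that \<open>X\<^sup>H\<close> does not increase the Hermitian norm, so this
  property is closed under products. It holds for the unitary \<open>\<Theta>\<close>, for \<open>U\<^sup>H\<close> and \<open>U\<^sup>T\<close>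
  (adjoints of isometries), and, by Bessel's inequality, for \<open>U\<close> and \<open>U\<^sup>*\<close>; the two
  Loewner bounds follow. Since the range of \<open>U\<close> contains the columns of \<open>F\<^sup>H\<close> and
  \<open>G\<^sup>T\<close>, the projector \<open>U U\<^sup>H\<close> fixes them, i.e. \<open>F U U\<^sup>H = F\<close> and
  \<open>U\<^sup>* U\<^sup>T G\<^sup>H = G\<^sup>H\<close>, which gives (i). Symmetry is preserved by every congruence
  \<open>X \<mapsto> A X A\<^sup>T\<close>, and \<open>\<Theta>\<^sub>l\<^sub>r\<close> factors through \<open>\<complex>\<^sup>k\<close> with \<open>k = rank Z \<le> N\<^sub>t + N\<^sub>r\<close>.
\<close>

lemma cconj_carrier[simp]: "A \<in> carrier_mat n m \<Longrightarrow> cconj A \<in> carrier_mat n m"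
  and dim_cconj[simp]: "dim_row (cconj A) = dim_row A" "dim_col (cconj A) = dim_col A"
  by (auto simp: cconj_def)

lemma adj_carrier[simp]: "A \<in> carrier_mat n m \<Longrightarrow> adj A \<in> carrier_mat m n"
  and dim_adj[simp]: "dim_row (adj A) = dim_col A" "dim_col (adj A) = dim_row A"
  by (auto simp: adj_def cconj_def)

lemma index_cconj[simp]:
  "i < dim_row A \<Longrightarrow> j < dim_col A \<Longrightarrow> cconj A $$ (i, j) = cnj (A $$ (i, j))"
  by (simp add: cconj_def)

lemma index_adj[simp]:
  "i < dim_col A \<Longrightarrow> j < dim_row A \<Longrightarrow> adj A $$ (i, j) = cnj (A $$ (j, i))"
  by (simp add: adj_def cconj_def)

lemma adj_adj[simp]: "adj (adj A) = A"
  and adj_cconj[simp]: "adj (cconj A) = transpose_mat A"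
  and cconj_adj[simp]: "cconj (adj A) = transpose_mat A"
  and transpose_adj[simp]: "transpose_mat (adj A) = cconj A"
  and adj_transpose[simp]: "adj (transpose_mat A) = cconj A"
  and cconj_transpose[simp]: "cconj (transpose_mat A) = adj A"
  and cconj_one[simp]: "cconj (1\<^sub>m n) = 1\<^sub>m n"
  by (auto intro!: eq_matI)

lemma cconj_mult:
  "A \<in> carrier_mat n m \<Longrightarrow> B \<in> carrier_mat m p \<Longrightarrow> cconj (A * B) = cconj A * cconj B"
  by (intro eq_matI) (auto simp: scalar_prod_def cnj_sum)

lemma adj_mult:
  "A \<in> carrier_mat n m \<Longrightarrow> B \<in> carrier_mat m p \<Longrightarrow> adj (A * B) = adj B * adj A"
  unfolding adj_def by (simp add: cconj_mult transpose_mult[of _ n m _ p])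

lemma assoc_mult_mat_middle:
  fixes A B C D E :: "'a :: semiring_0 mat"
  assumes A: "A \<in> carrier_mat n0 n1" and B: "B \<in> carrier_mat n1 n2"
    and C: "C \<in> carrier_mat n2 n3" and D: "D \<in> carrier_mat n3 n4" and E: "E \<in> carrier_mat n4 n5"
  shows "A * (B * C * D) * E = A * B * C * (D * E)"
proof -
  have BC: "B * C \<in> carrier_mat n1 n3" and AB: "A * B \<in> carrier_mat n0 n2"
    using A B C by simp_all
  have "A * (B * C * D) = A * (B * C) * D"
    using assoc_mult_mat[OF A BC D] by simp
  also have "A * (B * C) = A * B * C"
    using assoc_mult_mat[OF A B C] by simp
  finally have "A * (B * C * D) * E = A * B * C * D * E" by simp
  also have "\<dots> = A * B * C * (D * E)"
    using assoc_mult_mat[OF mult_carrier_mat[OF AB C] D E] .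
  finally show ?thesis .
qed

lemma map_vec_cnj_eq_conjugate: "map_vec cnj x = conjugate x"
  by (intro eq_vecI) auto

lemma conjugate_mult_mat_vec:
  "A \<in> carrier_mat n m \<Longrightarrow> x \<in> carrier_vec m \<Longrightarrow> conjugate (A *\<^sub>v x) = cconj A *\<^sub>v conjugate x"
  by (intro eq_vecI) (auto simp: scalar_prod_def cnj_sum)

lemma conjugate_sprod_self_nonneg: "0 \<le> conjugate x \<bullet> (x :: complex vec)"
  using conjugate_square_ge_0_vec[of x] comm_scalar_prod[of x "dim_vec x" "conjugate x"] by simp

lemma conjugate_sprod_adj:
  assumes A: "A \<in> carrier_mat n m" and x: "x \<in> carrier_vec n" and y: "y \<in> carrier_vec m"
  shows "conjugate x \<bullet> (A *\<^sub>v y) = conjugate (adj A *\<^sub>v x) \<bullet> y"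
proof -
  have "conjugate (adj A *\<^sub>v x) = transpose_mat A *\<^sub>v conjugate x"
    using conjugate_mult_mat_vec[OF adj_carrier[OF A] x] by simp
  then show ?thesis
    using transpose_vec_mult_scalar[OF A y, of "conjugate x"] x by simp
qed

text \<open>On \<^typ>\<open>complex\<close>, \<open>0 \<le> z\<close> (HOL-Library.Complex_Order) means that \<open>z\<close> is a nonnegative real.\<close>

lemma psd_iff:
  "A \<in> carrier_mat n n \<Longrightarrow> psd A \<longleftrightarrow> (\<forall>x \<in> carrier_vec n. 0 \<le> conjugate x \<bullet> (A *\<^sub>v x))"
  by (auto simp: psd_def map_vec_cnj_eq_conjugate less_eq_complex_def)

lemma loewner_le_refl: "A \<in> carrier_mat n n \<Longrightarrow> loewner_le A A"
proof -
  assume A: "A \<in> carrier_mat n n"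
  have "A - A = 0\<^sub>m n n" using A by (intro eq_matI) auto
  moreover have "0\<^sub>m n n *\<^sub>v x = 0\<^sub>v n" if "x \<in> carrier_vec n" for x :: "complex vec"
    using that by (intro eq_vecI) auto
  ultimately show ?thesis
    using A by (simp add: loewner_le_def psd_iff[of _ n])
qed

lemma loewner_le_one_iff_contraction:
  assumes A: "A \<in> carrier_mat n m"
  shows "loewner_le (A * adj A) (1\<^sub>m n) \<longleftrightarrow>
    (\<forall>x \<in> carrier_vec n. conjugate (adj A *\<^sub>v x) \<bullet> (adj A *\<^sub>v x) \<le> conjugate x \<bullet> x)"
proof -
  have AA: "A * adj A \<in> carrier_mat n n" using mult_carrier_mat[OF A adj_carrier[OF A]] .
  have D: "1\<^sub>m n - A * adj A \<in> carrier_mat n n" using minus_carrier_mat[OF AA] .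
  have form: "conjugate x \<bullet> ((1\<^sub>m n - A * adj A) *\<^sub>v x)
      = conjugate x \<bullet> x - conjugate (adj A *\<^sub>v x) \<bullet> (adj A *\<^sub>v x)"
    if x: "x \<in> carrier_vec n" for x
  proof -
    have y: "adj A *\<^sub>v x \<in> carrier_vec m" using adj_carrier[OF A] x by simp
    have "(1\<^sub>m n - A * adj A) *\<^sub>v x = x - A *\<^sub>v (adj A *\<^sub>v x)"
      using A x by (simp add: minus_mult_distrib_mat_vec[of _ n n] assoc_mult_mat_vec[of _ n m _ n])
    then have "conjugate x \<bullet> ((1\<^sub>m n - A * adj A) *\<^sub>v x)
        = conjugate x \<bullet> x - conjugate x \<bullet> (A *\<^sub>v (adj A *\<^sub>v x))"
      using A x y by (simp add: scalar_prod_minus_distrib[of _ n])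
    then show ?thesis
      using conjugate_sprod_adj[OF A x y] by simp
  qed
  show ?thesis
    using A AA by (simp add: loewner_le_def psd_iff[OF D] form)
qed

lemma loewner_le_one_mult:
  assumes A: "A \<in> carrier_mat n m" and B: "B \<in> carrier_mat m p"
    and contr_A: "loewner_le (A * adj A) (1\<^sub>m n)" and contr_B: "loewner_le (B * adj B) (1\<^sub>m m)"
  shows "loewner_le (A * B * adj (A * B)) (1\<^sub>m n)"
  unfolding loewner_le_one_iff_contraction[OF mult_carrier_mat[OF A B]]
proof
  fix x :: "complex vec" assume x: "x \<in> carrier_vec n"
  define y where "y = adj A *\<^sub>v x"
  have y: "y \<in> carrier_vec m" using adj_carrier[OF A] x by (simp add: y_def)
  have "adj (A * B) *\<^sub>v x = adj B *\<^sub>v y"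
    using A B x by (simp add: y_def adj_mult[OF A B] assoc_mult_mat_vec[of _ p m _ n])
  moreover have "conjugate (adj B *\<^sub>v y) \<bullet> (adj B *\<^sub>v y) \<le> conjugate y \<bullet> y"
    using contr_B y unfolding loewner_le_one_iff_contraction[OF B] by blast
  moreover have "conjugate y \<bullet> y \<le> conjugate x \<bullet> x"
    using contr_A x unfolding loewner_le_one_iff_contraction[OF A] y_def by blast
  ultimately show "conjugate (adj (A * B) *\<^sub>v x) \<bullet> (adj (A * B) *\<^sub>v x) \<le> conjugate x \<bullet> x"
    by simp
qed

lemma isometry_loewner_le_one:
  assumes U: "U \<in> carrier_mat n m" and iso: "adj U * U = 1\<^sub>m m"
  shows "loewner_le (U * adj U) (1\<^sub>m n)"
  unfolding loewner_le_one_iff_contraction[OF U]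
proof
  fix x :: "complex vec" assume x: "x \<in> carrier_vec n"
  define z where "z = adj U *\<^sub>v x"
  define p where "p = U *\<^sub>v z"
  define r where "r = x - p"
  have z: "z \<in> carrier_vec m" using adj_carrier[OF U] x by (simp add: z_def)
  have p: "p \<in> carrier_vec n" using U z by (simp add: p_def)
  have r: "r \<in> carrier_vec n" using x p by (simp add: r_def)
  have x_eq: "x = p + r" using x p by (auto simp: r_def intro!: eq_vecI)
  have "adj U *\<^sub>v r = z - (adj U * U) *\<^sub>v z"
    using U x z by (simp add: r_def p_def z_def mult_minus_distrib_mat_vec[of _ m n]
        assoc_mult_mat_vec[of _ m n _ m])
  then have r_perp: "adj U *\<^sub>v r = 0\<^sub>v m" using iso z by simp
  have "conjugate x \<bullet> x = conjugate x \<bullet> p + conjugate x \<bullet> r"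
    using x p r by (simp add: x_eq[symmetric] scalar_prod_add_distrib[of _ n, symmetric])
  also have "conjugate x \<bullet> p = conjugate z \<bullet> z"
    unfolding p_def using conjugate_sprod_adj[OF U x z] by (simp add: z_def[symmetric])
  also have "conjugate x \<bullet> r = conjugate p \<bullet> r + conjugate r \<bullet> r"
    by (subst x_eq) (simp add: p r conjugate_add_vec[of _ n] add_scalar_prod_distrib[of _ n])
  also have "conjugate p \<bullet> r = 0"
    using conjugate_sprod_adj[OF adj_carrier[OF U] z r] z r_perp by (simp add: p_def)
  finally have "conjugate x \<bullet> x = conjugate z \<bullet> z + conjugate r \<bullet> r" by simp
  then show "conjugate (adj U *\<^sub>v x) \<bullet> (adj U *\<^sub>v x) \<le> conjugate x \<bullet> x"
    using conjugate_sprod_self_nonneg[of r] by (simp add: z_def)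
qed

lemma isometry_range_projection:
  assumes U: "U \<in> carrier_mat n m" and iso: "adj U * U = 1\<^sub>m m"
    and A: "A \<in> carrier_mat n p" and cols: "set (cols A) \<subseteq> colspace U"
  shows "U * (adj U * A) = A"
proof (rule mat_col_eqI)
  fix j assume "j < dim_col A"
  then have j: "j < p" and "col A j \<in> colspace U"
    using A cols by (auto simp: set_conv_nth)
  then obtain y where y: "y \<in> carrier_vec m" "col A j = U *\<^sub>v y"
    using U unfolding colspace_def by auto
  have "col (U * (adj U * A)) j = U *\<^sub>v (adj U *\<^sub>v col A j)"
    using col_mult2[OF U mult_carrier_mat[OF adj_carrier[OF U] A] j]
      col_mult2[OF adj_carrier[OF U] A j] by simp
  also have "adj U *\<^sub>v col A j = (adj U * U) *\<^sub>v y"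
    using U y by (simp add: assoc_mult_mat_vec[of _ m n _ m])
  finally show "col (U * (adj U * A)) j = col A j" using iso y by simp
qed (use U A in auto)

lemma (in vec_space) rank_mult_le_left:
  assumes A: "A \<in> carrier_mat n m" and B: "B \<in> carrier_mat m p"
  shows "rank (A * B) \<le> rank A"
proof -
  have AB: "A * B \<in> carrier_mat n p" using A B by simp
  have cA: "set (cols A) \<subseteq> carrier_vec n" and cAB: "set (cols (A * B)) \<subseteq> carrier_vec n"
    using cols_dim[of A] cols_dim[of "A * B"] A AB by auto
  have "set (cols (A * B)) \<subseteq> col_space A"
  proof
    fix v assume "v \<in> set (cols (A * B))"
    then obtain j where j: "j < p" and v: "v = col (A * B) j"
      using AB by (metis carrier_matD(2) cols_length cols_nth in_set_conv_nth)
    have "col B j \<in> carrier_vec m" using B j by simp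
    then show "v \<in> col_space A"
      unfolding col_space_eq[OF A] v col_mult2[OF A B j] using A by auto
  qed
  then have sub: "span (set (cols (A * B))) \<subseteq> span (set (cols A))"
    unfolding col_space_def by (rule span_subsetI[OF cA])
  have sA: "subspace class_ring (span (set (cols A))) V" using span_is_subspace[OF cA] .
  have sAB: "subspace class_ring (span (set (cols (A * B)))) V" using span_is_subspace[OF cAB] .
  show ?thesis
    unfolding rank_def
    using vectorspace.subspace_dim[OF subspace_is_vs[OF sA] nested_subspaces[OF sA sAB sub]
        fin_dim_span_cols[OF A]] fin_dim_span_cols[OF AB] by auto
qed

lemma crank_mult_le:
  assumes A: "A \<in> carrier_mat n m" and B: "B \<in> carrier_mat m p"
  shows "crank (A * B) \<le> m"
proof -
  have "vec_space.rank n (A * B) \<le> vec_space.rank n A"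
    by (rule vec_space.rank_mult_le_left[OF A B])
  also have "\<dots> \<le> m"
    by (rule vec_space.rank_le_nc[OF A])
  finally show ?thesis using A by (simp add: crank_def)
qed

lemma crank_le_dim_col: "crank A \<le> dim_col A"
  unfolding crank_def by (rule vec_space.rank_le_nc[OF carrier_mat_triv])

lemma cols_subset_colspace: "set (cols A) \<subseteq> colspace A"
proof
  fix v assume "v \<in> set (cols A)"
  then obtain j where j: "j < dim_col A" "v = col A j" by (auto simp: in_set_conv_nth)
  then have "v = A *\<^sub>v unit_vec (dim_col A) j"
    using col_mult2[of A "dim_row A" "dim_col A" "1\<^sub>m (dim_col A)" "dim_col A" j] by simp
  then show "v \<in> colspace A" unfolding colspace_def by auto
qed

lemma cols_hcat: "dim_row A = dim_row B \<Longrightarrow> cols (hcat A B) = cols A @ cols B"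
  unfolding hcat_def by (rule cols_mat_of_cols) (use cols_dim[of A] cols_dim[of B] in auto)

lemma hcat_carrier:
  assumes A: "A \<in> carrier_mat n p" and B: "B \<in> carrier_mat n q"
  shows "hcat A B \<in> carrier_mat n (p + q)"
  using mat_of_cols_carrier(1)[of n "cols A @ cols B"] A B by (simp add: hcat_def)

lemma transpose_congruence_symmetric:
  fixes A S :: "'a :: comm_semiring_0 mat"
  assumes A: "A \<in> carrier_mat n m" and S: "S \<in> carrier_mat m m" and sym: "transpose_mat S = S"
  shows "transpose_mat (A * S * transpose_mat A) = A * S * transpose_mat A"
proof -
  have AS: "A * S \<in> carrier_mat n m" and At: "transpose_mat A \<in> carrier_mat m n"
    using A S by simp_all
  have "transpose_mat (A * S * transpose_mat A) = A * transpose_mat (A * S)"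
    using transpose_mult[OF AS At] by simp
  also have "\<dots> = A * (S * transpose_mat A)"
    using transpose_mult[OF A S] sym by simp
  finally show ?thesis
    using assoc_mult_mat[OF A S At] by simp
qed

lemma isometry_compression_loewner_le_one:
  assumes U: "U \<in> carrier_mat n m" and iso: "adj U * U = 1\<^sub>m m"
    and T: "T \<in> carrier_mat n n" and contr: "loewner_le (T * adj T) (1\<^sub>m n)"
  shows "loewner_le (adj U * T * cconj U * adj (adj U * T * cconj U)) (1\<^sub>m m)"
proof -
  have aU: "adj U \<in> carrier_mat m n" and cU: "cconj U \<in> carrier_mat n m" using U by simp_all
  have "loewner_le (adj U * adj (adj U)) (1\<^sub>m m)"
    using iso loewner_le_refl[of "1\<^sub>m m" m] by simp
  then have aUT: "loewner_le (adj U * T * adj (adj U * T)) (1\<^sub>m m)"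
    by (rule loewner_le_one_mult[OF aU T _ contr])
  have "adj (cconj U) * cconj U = cconj (adj U * U)"
    using cconj_mult[OF aU U] by simp
  then have "loewner_le (cconj U * adj (cconj U)) (1\<^sub>m n)"
    using isometry_loewner_le_one[OF cU] iso by simp
  then show ?thesis
    by (rule loewner_le_one_mult[OF mult_carrier_mat[OF aU T] cU aUT])
qed

lemma isometry_expansion_loewner_le_one:
  assumes U: "U \<in> carrier_mat n m" and iso: "adj U * U = 1\<^sub>m m"
    and S: "S \<in> carrier_mat m m" and contr: "loewner_le (S * adj S) (1\<^sub>m m)"
  shows "loewner_le (U * S * transpose_mat U * adj (U * S * transpose_mat U)) (1\<^sub>m n)"
proof -
  have tU: "transpose_mat U \<in> carrier_mat m n" using U by simp
  have US: "loewner_le (U * S * adj (U * S)) (1\<^sub>m n)"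
    by (rule loewner_le_one_mult[OF U S isometry_loewner_le_one[OF U iso] contr])
  have "transpose_mat U * adj (transpose_mat U) = cconj (adj U * U)"
    using cconj_mult[OF adj_carrier[OF U] U] by simp
  then have "loewner_le (transpose_mat U * adj (transpose_mat U)) (1\<^sub>m m)"
    using iso loewner_le_refl[of "1\<^sub>m m" m] by simp
  then show ?thesis
    by (rule loewner_le_one_mult[OF mult_carrier_mat[OF U S] tU US])
qed

lemma isometry_range_projection_right:
  assumes U: "U \<in> carrier_mat n m" and iso: "adj U * U = 1\<^sub>m m"
    and F: "F \<in> carrier_mat p n" and cols: "set (cols (adj F)) \<subseteq> colspace U"
  shows "F * U * adj U = F"
proof -
  have aU: "adj U \<in> carrier_mat m n" and aF: "adj F \<in> carrier_mat n p" using U F by simp_all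
  have "F = adj (U * (adj U * adj F))"
    using isometry_range_projection[OF U iso aF cols] by simp
  also have "\<dots> = F * U * adj U"
    using adj_mult[OF U mult_carrier_mat[OF aU aF]] adj_mult[OF aU aF] by simp
  finally show ?thesis by simp
qed

lemma isometry_range_projection_cconj:
  assumes U: "U \<in> carrier_mat n m" and iso: "adj U * U = 1\<^sub>m m"
    and A: "A \<in> carrier_mat n p" and cols: "set (cols A) \<subseteq> colspace U"
  shows "cconj U * (transpose_mat U * cconj A) = cconj A"
proof -
  have aU: "adj U \<in> carrier_mat m n" using U by simp
  have "cconj A = cconj (U * (adj U * A))"
    using isometry_range_projection[OF U iso A cols] by simp
  also have "\<dots> = cconj U * (transpose_mat U * cconj A)"
    using cconj_mult[OF U mult_carrier_mat[OF aU A]] cconj_mult[OF aU A] by simp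
  finally show ?thesis by simp
qed

lemma compression_sandwich_eq:
  assumes U: "U \<in> carrier_mat n m" and F: "F \<in> carrier_mat p n" and T: "T \<in> carrier_mat n n"
    and H: "H \<in> carrier_mat n q"
    and F_range: "F * U * adj U = F" and H_range: "cconj U * (transpose_mat U * H) = H"
  shows "F * (U * (adj U * T * cconj U) * transpose_mat U) * H = F * T * H"
proof -
  have aU: "adj U \<in> carrier_mat m n" and cU: "cconj U \<in> carrier_mat n m"
    and tU: "transpose_mat U \<in> carrier_mat m n" using U by simp_all
  have "F * (U * (adj U * T * cconj U) * transpose_mat U) * H
      = F * U * (adj U * T * cconj U) * (transpose_mat U * H)"
    by (rule assoc_mult_mat_middle[OF F U mult_carrier_mat[OF mult_carrier_mat[OF aU T] cU] tU H])
  also have "\<dots> = F * U * adj U * T * (cconj U * (transpose_mat U * H))"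
    by (rule assoc_mult_mat_middle[OF mult_carrier_mat[OF F U] aU T cU mult_carrier_mat[OF tU H]])
  finally show ?thesis using F_range H_range by simp
qed

theorem theorem2:
  fixes Nt Nr M k :: nat
    and F G Hd \<Theta> Z U \<Theta>t \<Theta>lr :: "complex mat"
  assumes "Nt > 0" and "Nr > 0" and "M > Nt + Nr"
    and "F \<in> carrier_mat Nr M" and "G \<in> carrier_mat Nt M"
    and "Hd \<in> carrier_mat Nr Nt" and "\<Theta> \<in> carrier_mat M M"
    and "\<Theta> * adj \<Theta> = 1\<^sub>m M" and "\<Theta> = transpose_mat \<Theta>"
    and "Z = hcat (adj F) (transpose_mat G)"
    and "k = crank Z"
    and "U \<in> carrier_mat M k" and "adj U * U = 1\<^sub>m k"
    and "colspace U = colspace Z"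
    and "\<Theta>t = adj U * \<Theta> * cconj U"
    and "\<Theta>lr = U * \<Theta>t * transpose_mat U"
  shows "transpose_mat \<Theta>lr = \<Theta>lr \<and> crank \<Theta>lr \<le> Nt + Nr
    \<and> transpose_mat \<Theta>t = \<Theta>t \<and> loewner_le (\<Theta>t * adj \<Theta>t) (1\<^sub>m k)
    \<and> F * \<Theta> * adj G = F * \<Theta>lr * adj G
    \<and> Hd + F * \<Theta> * adj G = Hd + F * \<Theta>lr * adj G
    \<and> loewner_le (\<Theta>lr * adj \<Theta>lr) (1\<^sub>m M)"
proof -
  note F = assms(4) and G = assms(5) and \<Theta> = assms(7) and unitary = assms(8)
    and symmetric = assms(9)[symmetric] and Z = assms(10) and k_rank = assms(11) and U = assms(12)
    and iso = assms(13) and range = assms(14) and \<Theta>t = assms(15) and \<Theta>lr = assms(16)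
  have \<Theta>t_carrier: "\<Theta>t \<in> carrier_mat k k"
    using mult_carrier_mat[OF mult_carrier_mat[OF adj_carrier[OF U] \<Theta>] cconj_carrier[OF U]] \<Theta>t by simp
  have F_cols: "set (cols (adj F)) \<subseteq> colspace U" and G_cols: "set (cols (transpose_mat G)) \<subseteq> colspace U"
    using cols_subset_colspace[of Z] cols_hcat[of "adj F" "transpose_mat G"] F G Z range by auto
  have sym_t: "transpose_mat \<Theta>t = \<Theta>t"
    using transpose_congruence_symmetric[OF adj_carrier[OF U] \<Theta>] symmetric \<Theta>t by simp
  have "crank \<Theta>lr \<le> k"
    using crank_mult_le[OF U mult_carrier_mat[OF \<Theta>t_carrier transpose_carrier_mat[THEN iffD2, OF U]]]
      U \<Theta>t_carrier \<Theta>lr by (simp add: assoc_mult_mat[of _ M k _ k _ M])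
  also have "k \<le> Nr + Nt"
    using crank_le_dim_col[of Z] hcat_carrier[OF adj_carrier[OF F] transpose_carrier_mat[THEN iffD2, OF G]] Z k_rank
    by simp
  finally have rank: "crank \<Theta>lr \<le> Nt + Nr" by simp
  have contr_t: "loewner_le (\<Theta>t * adj \<Theta>t) (1\<^sub>m k)"
    using isometry_compression_loewner_le_one[OF U iso \<Theta>] unitary loewner_le_refl[of "1\<^sub>m M" M] \<Theta>t by simp
  have G_range: "cconj U * (transpose_mat U * adj G) = adj G"
    using isometry_range_projection_cconj[OF U iso transpose_carrier_mat[THEN iffD2, OF G] G_cols] by simp
  have "F * \<Theta>lr * adj G = F * \<Theta> * adj G"
    using compression_sandwich_eq[OF U F \<Theta> adj_carrier[OF G] isometry_range_projection_right[OF U iso F F_cols] G_range]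
      \<Theta>t \<Theta>lr by simp
  then show ?thesis
    using sym_t rank contr_t transpose_congruence_symmetric[OF U \<Theta>t_carrier sym_t]
      isometry_expansion_loewner_le_one[OF U iso \<Theta>t_carrier contr_t] \<Theta>lr by simp
qed

end
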